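(* Let $m\ge2$, $G=CK(2m-1)$, and let $B$ be a blocker for the simple Hamiltonian paths of $G$ whose $m$ edges are parallel (or equal) to the boundary edges $[0,1],\dots,[m-1,m]$, one per direction. Let $[\alpha,\alpha+1]$ and $[m-\delta-1,m-\delta]$ be the first and last edges of $\langle0,1,\dots,m\rangle$ belonging to $B$. Let $e\in B$ be parallel to one of the $\alpha+\delta$ boundary edges $[0,1],\dots,[\alpha-1,\alpha],[m-\delta,m-\delta+1],\dots,[m-1,m]$. Put $A=\langle\alpha,\alpha+1,\dots,m-\delta\rangle$ and $\bar A=\langle m-\delta,\dots,2m-2,0,1,\dots,\alpha\rangle$. Then $e$ connects an internal vertex of $A$ to an internal vertex of $\bar A$.
   Context: $CK(2m-1)$ is the complete convex geometric graph on $2m-1$ points in convex position, labelled clockwise $0,\dots,2m-2$ (elements of $\mathbb{Z}_{2m-1}$), with all segments as edges; boundary edges are $[i,i+1]$. The direction of $[i,j]$ is $i+j\pmod{2m-1}$; edges are parallel if they have the same direction. A simple Hamiltonian path (SHP) is a path through all vertices whose edges pairwise do not cross; a blocker for SHPs is an edge set of smallest possible size sharing an edge with every SHP. *)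

theory Defs
  imports Main
begin

text \<open>The complete convex geometric graph CK(n): vertices 0..n-1 in convex position,
  labelled clockwise; edges are all 2-element subsets of the vertex set.\<close>
definition ck_edges :: "nat \<Rightarrow> nat set set" where
  "ck_edges n = {{i, j} | i j. i < n \<and> j < n \<and> i \<noteq> j}"

definition edge_dir :: "nat \<Rightarrow> nat set \<Rightarrow> nat" where
  "edge_dir n e = (\<Sum>x\<in>e. x) mod n"

text \<open>Two segments between points in convex position cross iff their endpoints
  are four distinct points that interleave in the cyclic (equivalently linear) order.\<close>
definition crosses :: "nat set \<Rightarrow> nat set \<Rightarrow> bool" where
  "crosses e f = (\<exists>a b c d. ((e = {a, b} \<and> f = {c, d}) \<or> (e = {c, d} \<and> f = {a, b}))
                              \<and> a < c \<and> c < b \<and> b < d)"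

definition path_edges :: "nat list \<Rightarrow> nat set set" where
  "path_edges p = {{p ! k, p ! Suc k} | k. Suc k < length p}"

definition is_SHP :: "nat \<Rightarrow> nat list \<Rightarrow> bool" where
  "is_SHP n p = (distinct p \<and> set p = {..<n} \<and>
      (\<forall>e\<in>path_edges p. \<forall>f\<in>path_edges p. \<not> crosses e f))"

definition hits_all_SHP :: "nat \<Rightarrow> nat set set \<Rightarrow> bool" where
  "hits_all_SHP n B = (\<forall>p. is_SHP n p \<longrightarrow> B \<inter> path_edges p \<noteq> {})"

definition is_SHP_blocker :: "nat \<Rightarrow> nat set set \<Rightarrow> bool" where
  "is_SHP_blocker n B = (B \<subseteq> ck_edges n \<and> hits_all_SHP n B \<and>
      (\<forall>B'. B' \<subseteq> ck_edges n \<and> hits_all_SHP n B' \<longrightarrow> card B \<le> card B'))"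

end

theory Submission
  imports Defs
begin

text \<open>
  Suppose that \<open>e\<close> does not join an internal vertex of \<open>A\<close> to an internal vertex of the
  complementary arc \<open>Abar = \<langle>m-\<delta>, ..., 2m-2, 0, ..., \<alpha>\<rangle>\<close>. We build a simple Hamiltonian
  path that avoids \<open>B\<close>, contradicting that \<open>B\<close> is a blocker.

  Vertices are handled through lifts to \<open>\<nat>\<close>, reduced modulo \<open>n = 2m-1\<close>. If every vertex of a
  list of lifts extends the interval of lifts visited so far by one at either end, then each
  new edge has all earlier vertices on one side, so no two edges cross; when the list covers
  \<open>n\<close> consecutive lifts, its reduction is a simple Hamiltonian path.

  As \<open>B\<close> has exactly one edge in each direction \<open>2j+1\<close> (\<open>j < m\<close>), no edge of even direction
  \<open>2, ..., 2m-2\<close> is in \<open>B\<close>; the boundary edges of \<open>Abar\<close> are not in \<open>B\<close> (they lie before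
  \<open>[\<alpha>,\<alpha>+1]\<close>, after \<open>[m-\<delta>-1,m-\<delta>]\<close>, or have even direction); and the only edge of \<open>B\<close> parallel
  to \<open>e\<close> is \<open>e\<close> itself. If the direction of \<open>e\<close> is \<open>2i+1\<close>, a path starting at a suitable lift
  determined by \<open>i\<close> runs along the boundary of \<open>Abar\<close> to an end of \<open>A\<close>, zigzags over the
  internal vertices of \<open>A\<close> with edges of even direction and of direction \<open>2i+1\<close>, and finishes
  along the boundary of \<open>Abar\<close>.
\<close>

section \<open>Non-crossing chords\<close>

lemma path_edges_Cons_Cons [simp]:
  "path_edges (a # b # xs) = insert {a, b} (path_edges (b # xs))"
proof -
  have "{k. Suc k < length (a # b # xs)} = insert 0 (Suc ` {k. Suc k < length (b # xs)})"
    by (auto simp: image_iff less_Suc_eq_0_disj)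
  then show ?thesis
    unfolding path_edges_def setcompr_eq_image by (simp add: image_image)
qed

lemma path_edges_singleton [simp]: "path_edges [a] = {}"
  by (simp add: path_edges_def)

lemma path_edges_map_successively:
  assumes "successively P xs" "E \<in> path_edges (map f xs)"
  obtains a b where "P a b" "E = {f a, f b}"
  using assms(2) successively_nth[OF assms(1)] unfolding path_edges_def by fastforce

lemma crosses_commute: "crosses e f \<longleftrightarrow> crosses f e"
  unfolding crosses_def by blast

definition one_side :: "nat \<Rightarrow> nat \<Rightarrow> nat set \<Rightarrow> bool" where
  "one_side x y T \<longleftrightarrow>
     (\<forall>z\<in>T. \<not> (min x y < z \<and> z < max x y)) \<or> (\<forall>z\<in>T. min x y \<le> z \<and> z \<le> max x y)"

lemma one_side_commute: "one_side x y T \<longleftrightarrow> one_side y x T"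
  unfolding one_side_def by (simp add: min.commute max.commute)

lemma not_crosses_if_one_side:
  assumes "one_side x y T" "c \<in> T" "d \<in> T"
  shows "\<not> crosses {x, y} {c, d}"
proof
  assume "crosses {x, y} {c, d}"
  then obtain a b c' d' where "a < c'" "c' < b" "b < d'"
    "({x, y} = {a, b} \<and> {c, d} = {c', d'}) \<or> ({x, y} = {c', d'} \<and> {c, d} = {a, b})"
    unfolding crosses_def by blast
  then consider "min x y = a" "max x y = b" "c' \<in> T" "d' \<in> T"
    | "min x y = c'" "max x y = d'" "a \<in> T" "b \<in> T"
    using assms(2,3) by (auto simp: doubleton_eq_iff)
  then show False
    using assms(1) \<open>a < c'\<close> \<open>c' < b\<close> \<open>b < d'\<close> unfolding one_side_def
    by cases fastforce+
qed

definition noncrossing :: "nat set set \<Rightarrow> bool" where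
  "noncrossing S \<longleftrightarrow> (\<forall>E\<in>S. \<forall>F\<in>S. \<not> crosses E F)"

definition avoids_chords :: "nat set set \<Rightarrow> nat set \<Rightarrow> bool" where
  "avoids_chords S T \<longleftrightarrow> (\<forall>E\<in>S. \<forall>c\<in>T. \<forall>d\<in>T. \<not> crosses E {c, d})"

lemma noncrossing_insert_chord:
  assumes "one_side a b T'" "a \<in> T'" "b \<in> T'" "T \<subseteq> T'"
    and "avoids_chords S T'" "noncrossing S"
  shows "avoids_chords (insert {a, b} S) T" "noncrossing (insert {a, b} S)"
proof -
  have new: "\<not> crosses {a, b} {c, d}" if "c \<in> T'" "d \<in> T'" for c d
    using not_crosses_if_one_side[OF assms(1) that] .
  have old: "\<not> crosses E {c, d}" if "E \<in> S" "c \<in> T'" "d \<in> T'" for E c d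
    using assms(5) that unfolding avoids_chords_def by blast
  show "avoids_chords (insert {a, b} S) T"
    unfolding avoids_chords_def using new old assms(4) by blast
  show "noncrossing (insert {a, b} S)"
    using new[OF assms(2,3)] old[OF _ assms(2,3)] assms(6) crosses_commute
    unfolding noncrossing_def by blast
qed

lemma inj_on_mod_window:
  fixes n a :: nat
  shows "inj_on (\<lambda>v. v mod n) {a..<a + n}"
proof (rule linorder_inj_onI')
  fix u v assume "u \<in> {a..<a + n}" "v \<in> {a..<a + n}" "u < v"
  then have "0 < v - u" "v - u < n" by auto
  then have "\<not> n dvd v - u" using dvd_imp_le by fastforce
  then show "u mod n \<noteq> v mod n"
    using mod_eq_dvd_iff_nat[of u v n] \<open>u < v\<close> by auto
qed

lemma mod_window_image:
  fixes n a :: nat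
  assumes "0 < n"
  shows "(\<lambda>v. v mod n) ` {a..<a + n} = {..<n}"
proof (rule card_subset_eq)
  show "(\<lambda>v. v mod n) ` {a..<a + n} \<subseteq> {..<n}" using assms by (auto intro: mod_less_divisor)
  show "card ((\<lambda>v. v mod n) ` {a..<a + n}) = card {..<n}"
    using card_image[OF inj_on_mod_window] by simp
qed simp

lemma window_residues:
  fixes lo n :: nat
  assumes "0 < n"
  obtains w where "lo < w" "w \<le> lo + n"
    "\<And>v. lo \<le> v \<Longrightarrow> v < lo + n \<Longrightarrow> v mod n = (if v < w then v + n - w else v - w)"
proof
  define w where "w = n * Suc (lo div n)"
  show w: "lo < w" "w \<le> lo + n"
    using mult_div_mod_eq[of n lo] mod_less_divisor[OF assms, of lo]
    unfolding w_def mult_Suc_right by linarith+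
  fix v assume v: "lo \<le> v" "v < lo + n"
  show "v mod n = (if v < w then v + n - w else v - w)"
  proof (cases "v < w")
    case True
    have "(v + n - w) + n * (lo div n) = v"
      using times_div_less_eq_dividend[of n lo] v unfolding w_def mult_Suc_right by linarith
    moreover have "((v + n - w) + n * (lo div n)) mod n = v + n - w"
      unfolding mod_mult_self2 using True w v by simp
    ultimately show ?thesis using True by simp
  next
    case False
    have "(v - w) + n * Suc (lo div n) = v" using False unfolding w_def by simp
    moreover have "((v - w) + n * Suc (lo div n)) mod n = v - w"
      unfolding mod_mult_self2 using False w v by simp
    ultimately show ?thesis using False by simp
  qed
qed

lemma one_side_mod_Suc:
  fixes n x :: nat
  assumes "T \<subseteq> {..<n}"
  shows "one_side (x mod n) (Suc x mod n) T"
proof (cases "Suc (x mod n) = n")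
  case True
  then have "min (x mod n) (Suc x mod n) = 0" "max (x mod n) (Suc x mod n) = n - 1"
    by (simp_all add: mod_Suc)
  moreover have "z \<le> n - 1" if "z \<in> T" for z
    using assms that by auto
  ultimately show ?thesis unfolding one_side_def by simp
next
  case False
  then have "Suc x mod n = Suc (x mod n)" by (simp add: mod_Suc)
  then show ?thesis unfolding one_side_def by auto
qed

lemma one_side_window_ends:
  fixes lo hi n :: nat
  assumes "lo \<le> hi" "hi < lo + n"
  shows "one_side (lo mod n) (hi mod n) ((\<lambda>v. v mod n) ` {lo..hi})"
proof -
  let ?T = "(\<lambda>v. v mod n) ` {lo..hi}"
  have "0 < n" using assms by linarith
  then obtain w where w: "lo < w" "w \<le> lo + n"
    and res: "\<And>v. lo \<le> v \<Longrightarrow> v < lo + n \<Longrightarrow> v mod n = (if v < w then v + n - w else v - w)"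
    using window_residues[where lo = lo] by blast
  show ?thesis
  proof (cases "hi < w")
    case True
    then have mm: "min (lo mod n) (hi mod n) = lo + n - w" "max (lo mod n) (hi mod n) = hi + n - w"
      using assms w by (simp_all add: res)
    have between: "lo + n - w \<le> z \<and> z \<le> hi + n - w" if "z \<in> ?T" for z
      using that True assms(2) by (auto simp: res)
    have "min (lo mod n) (hi mod n) \<le> z \<and> z \<le> max (lo mod n) (hi mod n)" if "z \<in> ?T" for z
      unfolding mm using between[OF that] .
    then show ?thesis unfolding one_side_def by blast
  next
    case False
    then have mm: "min (lo mod n) (hi mod n) = hi - w" "max (lo mod n) (hi mod n) = lo + n - w"
      using assms w by (simp_all add: res)
    have outside: "z \<le> hi - w \<or> lo + n - w \<le> z" if "z \<in> ?T" for z
      using that assms(2) by (auto simp: res)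
    have "\<not> (min (lo mod n) (hi mod n) < z \<and> z < max (lo mod n) (hi mod n))" if "z \<in> ?T" for z
      unfolding mm using outside[OF that] by linarith
    then show ?thesis unfolding one_side_def by blast
  qed
qed

lemma one_side_window_chord:
  assumes "x \<in> {lo..hi}" "y \<in> {lo..hi}" "hi < lo + n"
    and "Suc x = y \<or> Suc y = x \<or> {x, y} = {lo, hi}"
  shows "one_side (x mod n) (y mod n) ((\<lambda>v. v mod n) ` {lo..hi})"
proof -
  have "(\<lambda>v. v mod n) ` {lo..hi} \<subseteq> {..<n}" using assms(1,3) by auto
  then show ?thesis
    using assms(4) one_side_mod_Suc one_side_commute one_side_window_ends[of lo hi n] assms(1-3)
    by (auto simp: doubleton_eq_iff)
qed

section \<open>Paths that grow an interval\<close>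

fun grows_interval :: "nat \<Rightarrow> nat \<Rightarrow> nat list \<Rightarrow> bool" where
  "grows_interval lo hi [] \<longleftrightarrow> True"
| "grows_interval lo hi (x # xs) \<longleftrightarrow>
     (x = Suc hi \<and> grows_interval lo x xs) \<or> (Suc x = lo \<and> grows_interval x hi xs)"

lemma grows_interval_ConsE:
  assumes "grows_interval lo hi (x # xs)" "lo \<le> hi" "c \<in> {lo, hi}"
  obtains lo' hi' where "grows_interval lo' hi' xs" "lo' \<le> hi'" "hi' + lo = Suc (hi + lo')"
    "{lo'..hi'} = insert x {lo..hi}" "x \<notin> {lo..hi}" "x \<in> {lo', hi'}"
    "Suc c = x \<or> Suc x = c \<or> {c, x} = {lo', hi'}"
proof -
  from assms(1) consider "x = Suc hi" "grows_interval lo x xs" | "Suc x = lo" "grows_interval x hi xs"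
    by auto
  then show ?thesis
  proof cases
    case 1
    then show ?thesis using assms(2,3) by (intro that[of lo x]) auto
  next
    case 2
    then show ?thesis using assms(2,3) by (intro that[of x hi]) (auto simp: insert_commute)
  qed
qed

lemma grows_interval_set:
  assumes "grows_interval lo hi xs" "lo \<le> hi"
  shows "distinct xs \<and> set xs \<inter> {lo..hi} = {} \<and>
    (\<exists>l. set xs \<union> {lo..hi} = {l..l + (hi - lo) + length xs})"
  using assms
proof (induction xs arbitrary: lo hi)
  case Nil
  then show ?case by auto
next
  case (Cons x xs)
  obtain lo' hi' where step: "grows_interval lo' hi' xs" "lo' \<le> hi'" "hi' + lo = Suc (hi + lo')"
    "{lo'..hi'} = insert x {lo..hi}" "x \<notin> {lo..hi}"
    using grows_interval_ConsE[OF Cons.prems insertI1] by metis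
  with Cons.IH obtain l where "distinct xs" "set xs \<inter> {lo'..hi'} = {}"
    "set xs \<union> {lo'..hi'} = {l..l + (hi' - lo') + length xs}"
    by blast
  moreover have "set (x # xs) \<union> {lo..hi} = set xs \<union> {lo'..hi'}" using step(4) by auto
  moreover have "l + (hi' - lo') + length xs = l + (hi - lo) + length (x # xs)"
    using step(3) Cons.prems(2) by simp
  ultimately show ?case using step(4,5) by auto
qed

lemma grows_interval_noncrossing:
  assumes "grows_interval lo hi xs" "lo \<le> hi" "c \<in> {lo, hi}" "hi + length xs < lo + n"
  defines "S \<equiv> path_edges (map (\<lambda>v. v mod n) (c # xs))"
  shows "avoids_chords S ((\<lambda>v. v mod n) ` {lo..hi}) \<and> noncrossing S"
  using assms(1-4) unfolding S_def
proof (induction xs arbitrary: lo hi c)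
  case Nil
  then show ?case by (simp add: avoids_chords_def noncrossing_def)
next
  case (Cons x xs)
  obtain lo' hi' where step: "grows_interval lo' hi' xs" "lo' \<le> hi'" "hi' + lo = Suc (hi + lo')"
    "{lo'..hi'} = insert x {lo..hi}" "x \<in> {lo', hi'}" "Suc c = x \<or> Suc x = c \<or> {c, x} = {lo', hi'}"
    using grows_interval_ConsE[OF Cons.prems(1-3)] by metis
  have "hi' < lo' + n" using step(3) Cons.prems(4) by simp
  moreover have "c \<in> {lo'..hi'}" "x \<in> {lo'..hi'}" using step(4) Cons.prems(2,3) by auto
  ultimately have "one_side (c mod n) (x mod n) ((\<lambda>v. v mod n) ` {lo'..hi'})"
    using one_side_window_chord step(6) by blast
  moreover have "avoids_chords (path_edges (map (\<lambda>v. v mod n) (x # xs))) ((\<lambda>v. v mod n) ` {lo'..hi'}) \<and>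
      noncrossing (path_edges (map (\<lambda>v. v mod n) (x # xs)))"
    using Cons.IH[OF step(1,2,5)] step(3) Cons.prems(4) by simp
  moreover have "(\<lambda>v. v mod n) ` {lo..hi} \<subseteq> (\<lambda>v. v mod n) ` {lo'..hi'}"
    using step(4) Cons.prems(2) by auto
  ultimately show ?case
    using noncrossing_insert_chord[of "c mod n" "x mod n" "(\<lambda>v. v mod n) ` {lo'..hi'}"]
      \<open>c \<in> {lo'..hi'}\<close> \<open>x \<in> {lo'..hi'}\<close> by simp
qed

lemma grows_interval_is_SHP:
  assumes "0 < n" "grows_interval s s xs" "length xs = n - 1"
  shows "is_SHP n (map (\<lambda>v. v mod n) (s # xs))"
proof -
  obtain l where "distinct xs" "s \<notin> set xs" "set (s # xs) = {l..l + length xs}"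
    using grows_interval_set[OF assms(2)] by auto
  moreover have "{l..l + length xs} = {l..<l + n}" using assms(1,3) by auto
  ultimately have "distinct (s # xs)" and set: "set (s # xs) = {l..<l + n}" by simp_all
  then have "distinct (map (\<lambda>v. v mod n) (s # xs))"
    using inj_on_mod_window by (simp only: distinct_map set)
  moreover have "set (map (\<lambda>v. v mod n) (s # xs)) = {..<n}"
    using mod_window_image[OF assms(1)] by (simp only: set_map set)
  moreover have "noncrossing (path_edges (map (\<lambda>v. v mod n) (s # xs)))"
    using grows_interval_noncrossing[OF assms(2)] assms by simp
  ultimately show ?thesis unfolding is_SHP_def noncrossing_def by blast
qed

fun grow_left :: "nat \<Rightarrow> nat \<Rightarrow> nat list" where
  "grow_left lo 0 = []"
| "grow_left lo (Suc r) = (lo - 1) # grow_left (lo - 1) r"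

fun grow_right :: "nat \<Rightarrow> nat \<Rightarrow> nat list" where
  "grow_right hi 0 = []"
| "grow_right hi (Suc r) = Suc hi # grow_right (Suc hi) r"

fun zigzag_right_left :: "nat \<Rightarrow> nat \<Rightarrow> nat \<Rightarrow> nat list" where
  "zigzag_right_left lo hi 0 = []"
| "zigzag_right_left lo hi (Suc k) = Suc hi # (lo - 1) # zigzag_right_left (lo - 1) (Suc hi) k"

fun zigzag_left_right :: "nat \<Rightarrow> nat \<Rightarrow> nat \<Rightarrow> nat list" where
  "zigzag_left_right lo hi 0 = []"
| "zigzag_left_right lo hi (Suc k) = (lo - 1) # Suc hi # zigzag_left_right (lo - 1) (Suc hi) k"

lemma length_grow_left [simp]: "length (grow_left lo r) = r"
  by (induction r arbitrary: lo) auto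

lemma length_grow_right [simp]: "length (grow_right hi r) = r"
  by (induction r arbitrary: hi) auto

lemma length_zigzag_right_left [simp]: "length (zigzag_right_left lo hi k) = 2 * k"
  by (induction k arbitrary: lo hi) auto

lemma length_zigzag_left_right [simp]: "length (zigzag_left_right lo hi k) = 2 * k"
  by (induction k arbitrary: lo hi) auto

lemma grows_interval_grow_left:
  assumes "lo' \<le> lo" "grows_interval lo' hi ys"
  shows "grows_interval lo hi (grow_left lo (lo - lo') @ ys)"
  using assms
proof (induction "lo - lo'" arbitrary: lo)
  case (Suc r)
  then have r: "lo - lo' = Suc r" "lo - 1 - lo' = r" "Suc (lo - 1) = lo" by simp_all
  have "grows_interval (lo - 1) hi (grow_left (lo - 1) r @ ys)"
    using Suc.hyps(1)[of "lo - 1"] Suc.prems r by simp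
  then show ?case unfolding r(1) using r(3) by simp
qed simp

lemma grows_interval_grow_right:
  assumes "hi \<le> hi'" "grows_interval lo hi' ys"
  shows "grows_interval lo hi (grow_right hi (hi' - hi) @ ys)"
  using assms
proof (induction "hi' - hi" arbitrary: hi)
  case (Suc r)
  then have r: "hi' - hi = Suc r" "hi' - Suc hi = r" by simp_all
  have "grows_interval lo (Suc hi) (grow_right (Suc hi) r @ ys)"
    using Suc.hyps(1)[of "Suc hi"] Suc.prems r by simp
  then show ?case unfolding r(1) by simp
qed simp

lemma grows_interval_zigzag_right_left:
  assumes "k \<le> lo" "grows_interval (lo - k) (hi + k) ys"
  shows "grows_interval lo hi (zigzag_right_left lo hi k @ ys)"
  using assms
proof (induction k arbitrary: lo hi)
  case (Suc k)
  then have "grows_interval (lo - 1) (Suc hi) (zigzag_right_left (lo - 1) (Suc hi) k @ ys)" by simp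
  then show ?case using Suc.prems(1) by simp
qed simp

lemma grows_interval_zigzag_left_right:
  assumes "k \<le> lo" "grows_interval (lo - k) (hi + k) ys"
  shows "grows_interval lo hi (zigzag_left_right lo hi k @ ys)"
  using assms
proof (induction k arbitrary: lo hi)
  case (Suc k)
  then have "grows_interval (lo - 1) (Suc hi) (zigzag_left_right (lo - 1) (Suc hi) k @ ys)" by simp
  then show ?case using Suc.prems(1) by simp
qed simp

lemma successively_grow_left:
  assumes "lo' \<le> lo" "\<And>v. lo' \<le> v \<Longrightarrow> v < lo \<Longrightarrow> P (Suc v) v" "successively P (lo' # ys)"
  shows "successively P (lo # grow_left lo (lo - lo') @ ys)"
  using assms
proof (induction "lo - lo'" arbitrary: lo)
  case (Suc r)
  then have r: "lo - lo' = Suc r" "lo - 1 - lo' = r" "Suc (lo - 1) = lo" by simp_all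
  have "successively P ((lo - 1) # grow_left (lo - 1) r @ ys)"
    using Suc.hyps(1)[of "lo - 1"] Suc.prems r by simp
  moreover have "P lo (lo - 1)" using Suc.prems(2)[of "lo - 1"] r by simp
  ultimately show ?case unfolding r(1) by simp
qed simp

lemma successively_grow_right:
  assumes "hi \<le> hi'" "\<And>v. hi \<le> v \<Longrightarrow> v < hi' \<Longrightarrow> P v (Suc v)" "successively P (hi' # ys)"
  shows "successively P (hi # grow_right hi (hi' - hi) @ ys)"
  using assms
proof (induction "hi' - hi" arbitrary: hi)
  case (Suc r)
  then have r: "hi' - hi = Suc r" "hi' - Suc hi = r" by simp_all
  have "successively P (Suc hi # grow_right (Suc hi) r @ ys)"
    using Suc.hyps(1)[of "Suc hi"] Suc.prems r by simp
  moreover have "P hi (Suc hi)" using Suc.prems(2)[of hi] r by simp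
  ultimately show ?case unfolding r(1) by simp
qed simp

lemma successively_zigzag_right_left:
  assumes "\<And>j. j < k \<Longrightarrow> P (lo - j) (Suc hi + j)" "\<And>j. j < k \<Longrightarrow> P (Suc hi + j) (lo - Suc j)"
    and "successively P ((lo - k) # ys)"
  shows "successively P (lo # zigzag_right_left lo hi k @ ys)"
  using assms
proof (induction k arbitrary: lo hi)
  case (Suc k)
  have "successively P ((lo - 1) # zigzag_right_left (lo - 1) (Suc hi) k @ ys)"
  proof (rule Suc.IH)
    show "P (lo - 1 - j) (Suc (Suc hi) + j)" if "j < k" for j
      using Suc.prems(1)[of "Suc j"] that by simp
    show "P (Suc (Suc hi) + j) (lo - 1 - Suc j)" if "j < k" for j
      using Suc.prems(2)[of "Suc j"] that by simp
    show "successively P ((lo - 1 - k) # ys)" using Suc.prems(3) by simp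
  qed
  then show ?case using Suc.prems(1)[of 0] Suc.prems(2)[of 0] by simp
qed simp

lemma successively_zigzag_left_right:
  assumes "\<And>j. j < k \<Longrightarrow> P (hi + j) (lo - Suc j)" "\<And>j. j < k \<Longrightarrow> P (lo - Suc j) (Suc hi + j)"
    and "successively P ((hi + k) # ys)"
  shows "successively P (hi # zigzag_left_right lo hi k @ ys)"
  using assms
proof (induction k arbitrary: lo hi)
  case (Suc k)
  have "successively P (Suc hi # zigzag_left_right (lo - 1) (Suc hi) k @ ys)"
  proof (rule Suc.IH)
    show "P (Suc hi + j) (lo - 1 - Suc j)" if "j < k" for j
      using Suc.prems(1)[of "Suc j"] that by simp
    show "P (lo - 1 - Suc j) (Suc (Suc hi) + j)" if "j < k" for j
      using Suc.prems(2)[of "Suc j"] that by simp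
    show "successively P ((Suc hi + k) # ys)" using Suc.prems(3) by simp
  qed
  then show ?case using Suc.prems(1)[of 0] Suc.prems(2)[of 0] by simp
qed simp

section \<open>Paths through allowed edges\<close>

text \<open>
  \<open>P x y\<close> means that the edge between the residues of the lifts \<open>x\<close> and \<open>y\<close> may be used (in
  the application: it is not in \<open>B\<close>). With \<open>D = m-\<delta>\<close>, the internal vertices of \<open>A\<close> are
  \<open>\<alpha> < a < D\<close> and the boundary of \<open>Abar\<close> lifts to \<open>[D, \<alpha>+n]\<close>.
\<close>

locale edge_rules =
  fixes n m \<alpha> D i :: nat and P :: "nat \<Rightarrow> nat \<Rightarrow> bool"
  assumes n_eq: "n + 1 = 2 * m"
    and \<alpha>_less_D: "\<alpha> < D" and D_le_m: "D \<le> m"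
    and P_commute: "\<And>x y. P x y \<Longrightarrow> P y x"
    and P_boundary: "\<And>v. D \<le> v \<Longrightarrow> v < \<alpha> + n \<Longrightarrow> P v (Suc v)"
    and P_even: "\<And>x y j. x + y = 2 * j + n \<Longrightarrow> 0 < j \<Longrightarrow> j < m \<Longrightarrow> P x y"
    and P_dir: "\<And>x y. x + y = 2 * i + 1 + n \<Longrightarrow> \<alpha> < y mod n \<Longrightarrow> y mod n < D \<Longrightarrow> P x y"
begin

lemma P_boundary_rev: "D \<le> v \<Longrightarrow> v < \<alpha> + n \<Longrightarrow> P (Suc v) v"
  using P_commute P_boundary by blast

lemma P_inner:
  assumes "x + y = 2 * i + 1 + n" "\<alpha> < a" "a < D" "y = a \<or> y = a + n"
  shows "P x y"
proof (rule P_dir[OF assms(1)])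
  have "a < n" using assms(3) D_le_m n_eq by linarith
  then have "y mod n = a" using assms(4) by auto
  then show "\<alpha> < y mod n" "y mod n < D" using assms(2,3) by simp_all
qed

lemma avoiding_path_below:
  assumes "i < \<alpha>"
  obtains s xs where "grows_interval s s xs" "length xs = n - 1" "successively P (s # xs)"
proof -
  define k where "k = D - \<alpha> - 1"
  define s where "s = 2 * i + 1 + n - D"
  define h where "h = \<alpha> + n"
  have ar: "D \<le> s" "k < D" "s + D = 2 * i + 1 + n" "Suc (s + k) < h" "s < h" "Suc (i + 1) \<le> m"
    using assms n_eq \<alpha>_less_D D_le_m unfolding k_def s_def h_def by linarith+
  \<comment> \<open>\<open>s, s-1, ..., D\<close>, then \<open>s+1, D-1, ..., s+k, D-k = \<alpha>+1\<close>, then \<open>s+k+1, ..., \<alpha>+n\<close>\<close>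
  define xs where
    "xs = grow_left s (s - D) @ zigzag_right_left D s k @ Suc (s + k) # grow_right (Suc (s + k)) (h - Suc (s + k))"
  have "grows_interval (D - k) (s + k) (Suc (s + k) # grow_right (Suc (s + k)) (h - Suc (s + k)) @ [])"
    using grows_interval_grow_right[of "Suc (s + k)" h "D - k" "[]"] ar by simp
  then have "grows_interval s s xs"
    unfolding xs_def using ar
    by (intro grows_interval_grow_left grows_interval_zigzag_right_left) simp_all
  moreover have "length xs = n - 1"
    unfolding xs_def using ar \<alpha>_less_D n_eq unfolding h_def k_def by simp
  moreover have "successively P (s # xs)"
    unfolding xs_def
  proof (intro successively_grow_left successively_zigzag_right_left)
    show "P (Suc v) v" if "D \<le> v" "v < s" for v
      using P_boundary_rev that ar unfolding h_def by simp
    show "P (D - j) (Suc s + j)" if "j < k" for j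
      using P_even[of _ _ "i + 1"] that ar by simp
    show "P (Suc s + j) (D - Suc j)" if "j < k" for j
      by (rule P_inner[of _ _ "D - Suc j"]) (use that ar in \<open>auto simp: k_def\<close>)
    have "successively P (Suc (s + k) # grow_right (Suc (s + k)) (h - Suc (s + k)) @ [])"
      by (rule successively_grow_right) (use P_boundary ar in \<open>simp_all add: h_def\<close>)
    moreover have "P (D - k) (Suc (s + k))" using P_even[of _ _ "i + 1"] ar by simp
    ultimately show "successively P ((D - k) # Suc (s + k) # grow_right (Suc (s + k)) (h - Suc (s + k)))"
      by simp
  qed (use ar in simp)
  ultimately show thesis using that by (simp add: xs_def)
qed

lemma avoiding_path_above:
  assumes "D \<le> i" "i < m"
  obtains s xs where "grows_interval s s xs" "length xs = n - 1" "successively P (s # xs)"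
proof -
  define k where "k = D - \<alpha> - 1"
  define s where "s = 2 * i + 1 - \<alpha>"
  define h where "h = \<alpha> + n"
  have ar: "D \<le> s - Suc k" "s \<le> h" "k < s" "s + \<alpha> = 2 * i + 1" "\<alpha> + 1 + k = D" "0 < i"
    using assms n_eq \<alpha>_less_D D_le_m unfolding k_def s_def h_def by linarith+
  \<comment> \<open>\<open>s, ..., \<alpha>+n\<close>, then \<open>s-1, \<alpha>+n+1, ..., s-k, \<alpha>+n+k\<close>, then \<open>s-k-1, ..., D\<close>\<close>
  define xs where
    "xs = grow_right s (h - s) @ zigzag_left_right s h k @ (s - Suc k) # grow_left (s - Suc k) (s - Suc k - D)"
  have "grows_interval (s - k) (h + k) ((s - Suc k) # grow_left (s - Suc k) (s - Suc k - D) @ [])"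
    using grows_interval_grow_left[of D "s - Suc k" "h + k" "[]"] ar by (simp add: Suc_diff_Suc)
  then have "grows_interval s s xs"
    unfolding xs_def using ar
    by (intro grows_interval_grow_right grows_interval_zigzag_left_right) simp_all
  moreover have "length xs = n - 1"
    unfolding xs_def using ar unfolding h_def by simp
  moreover have "successively P (s # xs)"
    unfolding xs_def
  proof (intro successively_grow_right successively_zigzag_left_right)
    show "P v (Suc v)" if "s \<le> v" "v < h" for v
      using P_boundary that ar unfolding h_def by simp
    show "P (h + j) (s - Suc j)" if "j < k" for j
      using P_even[of _ _ i] that ar assms unfolding h_def by simp
    show "P (s - Suc j) (Suc h + j)" if "j < k" for j
      by (rule P_inner[of _ _ "\<alpha> + 1 + j"]) (use that ar in \<open>auto simp: h_def\<close>)
    have "successively P ((s - Suc k) # grow_left (s - Suc k) (s - Suc k - D) @ [])"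
      by (rule successively_grow_left) (use P_boundary_rev ar in \<open>simp_all add: h_def\<close>)
    moreover have "P (h + k) (s - Suc k)" using P_even[of _ _ i] ar assms unfolding h_def by simp
    ultimately show "successively P ((h + k) # (s - Suc k) # grow_left (s - Suc k) (s - Suc k - D))"
      by simp
  qed (use ar in simp)
  ultimately show thesis using that by (simp add: xs_def)
qed

lemma avoiding_path:
  assumes "i < \<alpha> \<or> D \<le> i \<and> i < m"
  obtains s xs where "grows_interval s s xs" "length xs = n - 1" "successively P (s # xs)"
  using assms avoiding_path_below avoiding_path_above by blast

end

section \<open>Blockers with one edge in each odd direction\<close>

lemma edge_dir_doubleton: "a \<noteq> b \<Longrightarrow> edge_dir n {a, b} = (a + b) mod n"
  by (simp add: edge_dir_def)

lemma edge_dir_boundary: "edge_dir n {j, j + 1} = (2 * j + 1) mod n"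
  by (simp add: edge_dir_doubleton mult_2)

lemma odd_mod_eq:
  fixes n m j :: nat
  assumes "n + 1 = 2 * m" "j < m"
  shows "(2 * j + 1) mod n = (if j = m - 1 then 0 else 2 * j + 1)"
proof (cases "j = m - 1")
  case True
  then have "2 * j + 1 = n" using assms by simp
  then show ?thesis using True by simp
next
  case False
  then have "2 * j + 1 < n" using assms by simp
  then show ?thesis using False by simp
qed

lemma dir_partner_outside:
  fixes n m \<alpha> D i u v :: nat
  assumes "n + 1 = 2 * m" "D \<le> m" "\<alpha> < u" "u < D" "v < n"
    and "(u + v) mod n = (2 * i + 1) mod n" "i < \<alpha> \<or> D \<le> i \<and> i < m"
  shows "D < v \<or> v < \<alpha>"
proof -
  have "i < m" using assms(2-4,7) by linarith
  then have dir: "(2 * i + 1) mod n = (if i = m - 1 then 0 else 2 * i + 1)"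
    using odd_mod_eq[OF assms(1)] by blast
  have "u + v = (u + v) mod n \<or> u + v = (u + v) mod n + n"
    using assms(1,2,4,5) by (auto simp: mod_if)
  then show ?thesis using assms dir by (auto split: if_splits)
qed

locale parallel_blocker =
  fixes n m :: nat and B :: "nat set set"
  assumes n_eq: "n + 1 = 2 * m"
    and blocker: "is_SHP_blocker n B"
    and card_B: "card B = m"
    and edge_dir_B: "edge_dir n ` B = {edge_dir n {j, j + 1} | j. j < m}"
begin

lemma edge_dir_B_eq_odd: "edge_dir n ` B = (\<lambda>j. (2 * j + 1) mod n) ` {..<m}"
  unfolding edge_dir_B edge_dir_boundary by blast

lemma inj_on_edge_dir: "inj_on (edge_dir n) B"
proof -
  have "inj_on (\<lambda>j. (2 * j + 1) mod n) {..<m}"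
    using odd_mod_eq[OF n_eq] by (intro inj_onI) (auto split: if_splits)
  then have "card (edge_dir n ` B) = card B"
    unfolding edge_dir_B_eq_odd card_B by (simp add: card_image)
  moreover have "finite B" using card_B n_eq card.infinite by force
  ultimately show ?thesis by (simp add: inj_on_iff_eq_card)
qed

lemma edge_dir_lift:
  assumes "{x mod n, y mod n} \<in> B"
  shows "edge_dir n {x mod n, y mod n} = (x + y) mod n"
proof -
  have "x mod n \<noteq> y mod n"
    using assms blocker unfolding is_SHP_blocker_def ck_edges_def by (auto simp: doubleton_eq_iff)
  then show ?thesis by (simp add: edge_dir_doubleton mod_add_eq)
qed

lemma even_lift_notin_B:
  assumes "x + y = 2 * j + n" "0 < j" "j < m"
  shows "{x mod n, y mod n} \<notin> B"
proof
  assume "{x mod n, y mod n} \<in> B"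
  then have "(x + y) mod n \<in> (\<lambda>j. (2 * j + 1) mod n) ` {..<m}"
    using edge_dir_lift edge_dir_B_eq_odd by (metis imageI)
  then obtain l where "l < m" "(x + y) mod n = (2 * l + 1) mod n" by auto
  moreover have "(x + y) mod n = 2 * j" using assms n_eq by simp
  ultimately have "2 * j = (if l = m - 1 then 0 else 2 * l + 1)"
    using odd_mod_eq[OF n_eq \<open>l < m\<close>] by simp
  then show False using assms(2) by (auto split: if_splits) presburger
qed

lemma B_eq_if_edge_dir_eq:
  assumes "e \<in> B" "{x mod n, y mod n} \<in> B" "edge_dir n e = (x + y) mod n"
  shows "e = {x mod n, y mod n}"
  using inj_onD[OF inj_on_edge_dir _ assms(1,2)] assms(3) edge_dir_lift[OF assms(2)] by simp

lemma boundary_lift_notin_B: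
  assumes "2 \<le> m" "\<alpha> < m" "\<forall>j<\<alpha>. {j, j + 1} \<notin> B" "\<forall>j. D \<le> j \<and> j < m \<longrightarrow> {j, j + 1} \<notin> B"
    and "D \<le> v" "v < \<alpha> + n"
  shows "{v mod n, Suc v mod n} \<notin> B"
proof -
  consider "v < m" | "m \<le> v" "v < n" | "n \<le> v" by linarith
  then show ?thesis
  proof cases
    case 1
    then show ?thesis using assms n_eq by simp
  next
    case 2
    then show ?thesis using even_lift_notin_B[of v "Suc v" "v + 1 - m"] n_eq by simp
  next
    case 3
    moreover have "Suc (v - n) < n" using 3 assms(2,6) n_eq by linarith
    ultimately have "v mod n = v - n" "Suc v mod n = Suc (v - n)"
      using 3 by (simp_all add: mod_if Suc_diff_le)
    then show ?thesis using assms 3 by simp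
  qed
qed

lemma dir_partner_joins:
  assumes "e \<in> B" "edge_dir n e = (2 * i + 1) mod n" "i < \<alpha> \<or> D \<le> i \<and> i < m" "D \<le> m"
    and "x + y = 2 * i + 1 + n" "\<alpha> < y mod n" "y mod n < D" "{x mod n, y mod n} \<in> B"
  shows "e = {y mod n, x mod n} \<and> (D < x mod n \<or> x mod n < \<alpha>)"
proof
  have dir: "(y mod n + x mod n) mod n = (2 * i + 1) mod n"
    by (simp only: mod_add_eq add.commute[of y] assms(5) mod_add_self2)
  then show "e = {y mod n, x mod n}"
    using B_eq_if_edge_dir_eq[OF assms(1,8)] assms(2) by (simp add: insert_commute mod_add_eq add.commute)
  have "0 < n" using n_eq by (cases m) auto
  then show "D < x mod n \<or> x mod n < \<alpha>"
    using dir_partner_outside[OF n_eq assms(4,6,7) _ dir assms(3)] by simp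
qed

lemma edge_rules_if_not_joining:
  assumes "2 \<le> m" "\<alpha> < D" "D \<le> m"
    and "\<forall>j<\<alpha>. {j, j + 1} \<notin> B" "\<forall>j. D \<le> j \<and> j < m \<longrightarrow> {j, j + 1} \<notin> B"
    and "e \<in> B" "edge_dir n e = (2 * i + 1) mod n" "i < \<alpha> \<or> D \<le> i \<and> i < m"
    and "\<not> (\<exists>u v. e = {u, v} \<and> \<alpha> < u \<and> u < D \<and> (D < v \<or> v < \<alpha>))"
  shows "edge_rules n m \<alpha> D i (\<lambda>x y. {x mod n, y mod n} \<notin> B)"
proof
  have "\<alpha> < m" using assms(2,3) by simp
  then show "{v mod n, Suc v mod n} \<notin> B" if "D \<le> v" "v < \<alpha> + n" for v
    using boundary_lift_notin_B[OF assms(1) _ assms(4,5) that] by blast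
  show "{x mod n, y mod n} \<notin> B" if "x + y = 2 * i + 1 + n" "\<alpha> < y mod n" "y mod n < D" for x y
    using dir_partner_joins[OF assms(6-8,3) that] assms(9) that(2,3) by auto
  show "{y mod n, x mod n} \<notin> B" if "{x mod n, y mod n} \<notin> B" for x y
    using that by (simp add: insert_commute)
  show "{x mod n, y mod n} \<notin> B" if "x + y = 2 * j + n" "0 < j" "j < m" for x y j
    using even_lift_notin_B that .
qed (use n_eq assms(2,3) in simp_all)

lemma no_avoiding_growing_path:
  assumes "grows_interval s s xs" "length xs = n - 1"
  shows "\<not> successively (\<lambda>x y. {x mod n, y mod n} \<notin> B) (s # xs)"
proof
  assume avoids: "successively (\<lambda>x y. {x mod n, y mod n} \<notin> B) (s # xs)"
  have "0 < n" using n_eq by (cases m) auto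
  then obtain E where "E \<in> B" "E \<in> path_edges (map (\<lambda>v. v mod n) (s # xs))"
    using blocker grows_interval_is_SHP[OF _ assms] unfolding is_SHP_blocker_def hits_all_SHP_def
    by blast
  then show False using path_edges_map_successively[OF avoids] by metis
qed

end

theorem proposition4:
  fixes m \<alpha> \<delta> :: nat and B :: "nat set set" and e :: "nat set"
  assumes m2: "m \<ge> 2"
    and blocker: "is_SHP_blocker (2*m-1) B"
    and cardB: "card B = m"
    and dirs: "edge_dir (2*m-1) ` B = {edge_dir (2*m-1) {i, i+1} | i. i < m}"
    and alpha_lt: "\<alpha> < m" and alpha_in: "{\<alpha>, \<alpha>+1} \<in> B"
    and alpha_first: "\<forall>i<\<alpha>. {i, i+1} \<notin> B"
    and delta_lt: "\<delta> < m" and delta_in: "{m-\<delta>-1, m-\<delta>} \<in> B"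
    and delta_last: "\<forall>i. m-\<delta> \<le> i \<and> i < m \<longrightarrow> {i, i+1} \<notin> B"
    and e_in: "e \<in> B"
    and e_par: "\<exists>i. (i < \<alpha> \<or> (m-\<delta> \<le> i \<and> i < m)) \<and>
                    edge_dir (2*m-1) e = edge_dir (2*m-1) {i, i+1}"
  shows "\<exists>u v. e = {u, v} \<and> \<alpha> < u \<and> u < m-\<delta> \<and> (m-\<delta> < v \<or> v < \<alpha>)"
proof (rule ccontr)
  assume not_joining: "\<not> ?thesis"
  define n where "n = 2 * m - 1"
  define D where "D = m - \<delta>"
  interpret parallel_blocker n m B
    using m2 blocker cardB dirs unfolding n_def by unfold_locales simp_all
  have "\<alpha> < D"
  proof (rule ccontr)
    assume "\<not> \<alpha> < D"
    then have "m - \<delta> - 1 < \<alpha>" "m - \<delta> - 1 + 1 = m - \<delta>" using delta_lt unfolding D_def by auto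
    then show False using alpha_first delta_in by metis
  qed
  obtain i where i: "i < \<alpha> \<or> D \<le> i \<and> i < m" "edge_dir n e = (2 * i + 1) mod n"
    using e_par unfolding n_def[symmetric] D_def[symmetric] edge_dir_boundary by blast
  interpret edge_rules n m \<alpha> D i "\<lambda>x y. {x mod n, y mod n} \<notin> B"
    using edge_rules_if_not_joining[OF m2 \<open>\<alpha> < D\<close> _ alpha_first _ e_in i(2,1)] delta_last not_joining
    unfolding D_def by simp
  obtain s xs where "grows_interval s s xs" "length xs = n - 1"
    "successively (\<lambda>x y. {x mod n, y mod n} \<notin> B) (s # xs)"
    using i(1) avoiding_path by blast
  then show False using no_avoiding_growing_path by blast
qed

end
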